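(* Let $(X,\tau)$ be an extended locally convex space and let $\tau_F$ be its finest locally convex topology. A (finite-valued) seminorm on $X$ is continuous with respect to $\tau$ if and only if it is continuous with respect to $\tau_F$.
   Context: An extended seminorm on a vector space $X$ over $\mathbb{R}$ or $\mathbb{C}$ is a map $\rho:X\to[0,\infty]$ with $\rho(\alpha x)=|\alpha|\rho(x)$ and $\rho(x+y)\le\rho(x)+\rho(y)$. An extended locally convex space $(X,\tau)$ is a vector space with the topology induced by a family $\{\rho_i\}$ of extended seminorms (neighborhood base at $x_0$: $\{x:\max_{i\in J}\rho_i(x-x_0)<\varepsilon\}$, $J$ finite, $\varepsilon>0$). A locally convex topology is one induced in this way by finite-valued seminorms. The finest locally convex topology $\tau_F$ of $(X,\tau)$ is the locally convex topology on $X$ with $\tau_F\subseteq\tau$ such that every locally convex topology $\sigma\subseteq\tau$ on $X$ satisfies $\sigma\subseteq\tau_F$. *)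

theory Defs
  imports "HOL-Analysis.Analysis"
begin

text \<open>Vector space over a normed scalar field 'k (covers \<real> and \<complex>), given by a
  scalar multiplication satisfying the axioms of the locale vector_space.\<close>

definition ext_seminorm :: "('k::real_normed_field \<Rightarrow> 'a::ab_group_add \<Rightarrow> 'a) \<Rightarrow> ('a \<Rightarrow> ennreal) \<Rightarrow> bool" where
  "ext_seminorm smul \<rho> \<longleftrightarrow>
     (\<forall>\<alpha> x. \<rho> (smul \<alpha> x) = ennreal (norm \<alpha>) * \<rho> x) \<and>
     (\<forall>x y. \<rho> (x + y) \<le> \<rho> x + \<rho> y)"

definition seminorm :: "('k::real_normed_field \<Rightarrow> 'a::ab_group_add \<Rightarrow> 'a) \<Rightarrow> ('a \<Rightarrow> real) \<Rightarrow> bool" where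
  "seminorm smul p \<longleftrightarrow>
     (\<forall>x. 0 \<le> p x) \<and>
     (\<forall>\<alpha> x. p (smul \<alpha> x) = norm \<alpha> * p x) \<and>
     (\<forall>x y. p (x + y) \<le> p x + p y)"

definition induced_topology :: "('a::ab_group_add \<Rightarrow> ennreal) set \<Rightarrow> 'a topology" where
  "induced_topology R = topology (\<lambda>U. \<forall>x0\<in>U. \<exists>J \<subseteq> R. finite J \<and> (\<exists>\<epsilon>>0.
       {x. \<forall>\<rho>\<in>J. \<rho> (x - x0) < ennreal \<epsilon>} \<subseteq> U))"

definition ext_lc_topology :: "('k::real_normed_field \<Rightarrow> 'a::ab_group_add \<Rightarrow> 'a) \<Rightarrow> 'a topology \<Rightarrow> bool" where
  "ext_lc_topology smul \<tau> \<longleftrightarrow>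
     (\<exists>R. (\<forall>\<rho>\<in>R. ext_seminorm smul \<rho>) \<and> \<tau> = induced_topology R)"

definition lc_topology :: "('k::real_normed_field \<Rightarrow> 'a::ab_group_add \<Rightarrow> 'a) \<Rightarrow> 'a topology \<Rightarrow> bool" where
  "lc_topology smul \<sigma> \<longleftrightarrow>
     (\<exists>P. (\<forall>p\<in>P. seminorm smul p) \<and>
          \<sigma> = induced_topology ((\<lambda>p x. ennreal (p x)) ` P))"

definition coarser_topology :: "'a topology \<Rightarrow> 'a topology \<Rightarrow> bool" where
  "coarser_topology \<sigma> \<tau> \<longleftrightarrow> (\<forall>U. openin \<sigma> U \<longrightarrow> openin \<tau> U)"

definition finest_lc_topology :: "('k::real_normed_field \<Rightarrow> 'a::ab_group_add \<Rightarrow> 'a) \<Rightarrow> 'a topology \<Rightarrow> 'a topology \<Rightarrow> bool" where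
  "finest_lc_topology smul \<tau> \<tau>F \<longleftrightarrow>
     lc_topology smul \<tau>F \<and> coarser_topology \<tau>F \<tau> \<and>
     (\<forall>\<sigma>. lc_topology smul \<sigma> \<and> coarser_topology \<sigma> \<tau> \<longrightarrow> coarser_topology \<sigma> \<tau>F)"

end

theory Submission
  imports Defs
begin

text \<open>A seminorm \<open>p\<close> generates a locally convex topology \<open>\<sigma>\<^sub>p\<close> in which \<open>p\<close> is continuous.
  If \<open>p\<close> is \<open>\<tau>\<close>-continuous, continuity at \<open>0\<close> together with the translation invariance of the
  basic neighbourhoods of \<open>\<tau>\<close> gives \<open>\<sigma>\<^sub>p \<subseteq> \<tau>\<close>; maximality of \<open>\<tau>\<^sub>F\<close> then gives \<open>\<sigma>\<^sub>p \<subseteq> \<tau>\<^sub>F\<close>, so \<open>p\<close>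
  is \<open>\<tau>\<^sub>F\<close>-continuous. The converse holds because \<open>\<tau>\<^sub>F \<subseteq> \<tau>\<close>.\<close>

definition basic_nbhd :: "('a::ab_group_add \<Rightarrow> ennreal) set \<Rightarrow> 'a \<Rightarrow> real \<Rightarrow> 'a set" where
  "basic_nbhd J x0 \<epsilon> = {x. \<forall>\<rho>\<in>J. \<rho> (x - x0) < ennreal \<epsilon>}"

lemma basic_nbhd_antimono:
  assumes "J \<subseteq> J'" and "\<epsilon>' \<le> \<epsilon>"
  shows "basic_nbhd J' x0 \<epsilon>' \<subseteq> basic_nbhd J x0 \<epsilon>"
  using assms order_less_le_trans[OF _ ennreal_leI[OF assms(2)]]
  unfolding basic_nbhd_def by blast

lemma basic_nbhd_translate: "x \<in> basic_nbhd J x0 \<epsilon> \<longleftrightarrow> x - x0 \<in> basic_nbhd J 0 \<epsilon>"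
  by (simp add: basic_nbhd_def)

lemma istopology_induced:
  "istopology (\<lambda>U. \<forall>x0\<in>U. \<exists>J\<subseteq>R. finite J \<and> (\<exists>\<epsilon>>0. basic_nbhd J x0 \<epsilon> \<subseteq> U))"
  unfolding istopology_def
proof (intro conjI allI impI ballI)
  fix S T x0
  assume "\<forall>x0\<in>S. \<exists>J\<subseteq>R. finite J \<and> (\<exists>\<epsilon>>0. basic_nbhd J x0 \<epsilon> \<subseteq> S)"
    and "\<forall>x0\<in>T. \<exists>J\<subseteq>R. finite J \<and> (\<exists>\<epsilon>>0. basic_nbhd J x0 \<epsilon> \<subseteq> T)"
    and "x0 \<in> S \<inter> T"
  then obtain J1 e1 J2 e2 where J: "J1 \<subseteq> R" "finite J1" "e1 > 0" "basic_nbhd J1 x0 e1 \<subseteq> S"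
      "J2 \<subseteq> R" "finite J2" "e2 > 0" "basic_nbhd J2 x0 e2 \<subseteq> T"
    by (meson IntD1 IntD2)
  have "basic_nbhd (J1 \<union> J2) x0 (min e1 e2) \<subseteq> S \<inter> T"
    using basic_nbhd_antimono[of J1 "J1 \<union> J2" "min e1 e2" e1 x0]
      basic_nbhd_antimono[of J2 "J1 \<union> J2" "min e1 e2" e2 x0] J(4,8) by auto
  moreover have "min e1 e2 > 0"
    using J(3,7) by simp
  ultimately show "\<exists>J\<subseteq>R. finite J \<and> (\<exists>\<epsilon>>0. basic_nbhd J x0 \<epsilon> \<subseteq> S \<inter> T)"
    using J by (meson finite_UnI le_sup_iff)
next
  fix K x0
  assume "\<forall>S\<in>K. \<forall>x0\<in>S. \<exists>J\<subseteq>R. finite J \<and> (\<exists>\<epsilon>>0. basic_nbhd J x0 \<epsilon> \<subseteq> S)"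
    and "x0 \<in> \<Union>K"
  then show "\<exists>J\<subseteq>R. finite J \<and> (\<exists>\<epsilon>>0. basic_nbhd J x0 \<epsilon> \<subseteq> \<Union>K)"
    by (meson Union_upper UnionE order_trans)
qed

lemma openin_induced_topology:
  "openin (induced_topology R) U \<longleftrightarrow>
     (\<forall>x0\<in>U. \<exists>J\<subseteq>R. finite J \<and> (\<exists>\<epsilon>>0. basic_nbhd J x0 \<epsilon> \<subseteq> U))"
  using istopology_induced[of R]
  unfolding induced_topology_def basic_nbhd_def by simp

lemma topspace_induced_topology [simp]: "topspace (induced_topology R) = UNIV"
proof -
  have "openin (induced_topology R) UNIV"
    unfolding openin_induced_topology by (auto intro!: exI[of _ "{}"] exI[of _ 1])
  then show ?thesis
    by (metis openin_subset top.extremum_unique)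
qed

lemma continuous_map_coarser_topology:
  assumes "continuous_map \<sigma> Y f" and "coarser_topology \<sigma> \<tau>"
    and "topspace \<sigma> = topspace \<tau>"
  shows "continuous_map \<tau> Y f"
  using assms unfolding continuous_map_def coarser_topology_def by auto

lemma seminorm_zero:
  assumes "vector_space smul" and "seminorm smul p"
  shows "p 0 = 0"
proof -
  interpret vector_space smul by fact
  show ?thesis
    using assms(2) scale_zero_left[of 0] unfolding seminorm_def by (metis mult_eq_0_iff norm_zero)
qed

lemma seminorm_minus:
  assumes "vector_space smul" and "seminorm smul p"
  shows "p (- x) = p x"
proof -
  interpret vector_space smul by fact
  have "smul (-1) x = - x"
    using scale_minus_left[of 1 x] by simp
  then show ?thesis
    using assms(2) unfolding seminorm_def by (metis mult_1 norm_minus_cancel norm_one)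
qed

lemma seminorm_abs_diff_le:
  assumes "vector_space smul" and "seminorm smul p"
  shows "\<bar>p x - p y\<bar> \<le> p (x - y)"
proof -
  have "p x \<le> p (x - y) + p y" and "p y \<le> p (y - x) + p x"
    using assms(2) unfolding seminorm_def by (metis diff_add_cancel)+
  moreover have "p (y - x) = p (x - y)"
    using seminorm_minus[OF assms, of "x - y"] by simp
  ultimately show ?thesis by linarith
qed

definition seminorm_topology :: "('a::ab_group_add \<Rightarrow> real) \<Rightarrow> 'a topology" where
  "seminorm_topology p = induced_topology {\<lambda>x. ennreal (p x)}"

lemma topspace_seminorm_topology [simp]: "topspace (seminorm_topology p) = UNIV"
  by (simp add: seminorm_topology_def)

lemma lc_topology_seminorm_topology:
  "seminorm smul p \<Longrightarrow> lc_topology smul (seminorm_topology p)"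
  unfolding lc_topology_def seminorm_topology_def by (intro exI[of _ "{p}"]) auto

lemma openin_seminorm_topology:
  "openin (seminorm_topology p) U \<longleftrightarrow> (\<forall>x0\<in>U. \<exists>\<epsilon>>0. {x. p (x - x0) < \<epsilon>} \<subseteq> U)"
proof -
  have ball_eq: "basic_nbhd {\<lambda>x. ennreal (p x)} x0 \<epsilon> = {x. p (x - x0) < \<epsilon>}" if "\<epsilon> > 0" for x0 \<epsilon>
  proof -
    \<comment> \<open>also for \<open>a < 0\<close>, where \<open>ennreal a = 0\<close>\<close>
    have "ennreal a < ennreal \<epsilon> \<longleftrightarrow> a < \<epsilon>" for a
      using that by (cases "0 \<le> a") (auto simp: ennreal_less_iff ennreal_neg)
    then show ?thesis
      by (simp add: basic_nbhd_def)
  qed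
  have "(\<exists>J\<subseteq>{\<rho>}. finite J \<and> (\<exists>\<epsilon>>0. basic_nbhd J x0 \<epsilon> \<subseteq> U)) \<longleftrightarrow>
      (\<exists>\<epsilon>>0. basic_nbhd {\<rho>} x0 \<epsilon> \<subseteq> U)" for \<rho> x0
    using basic_nbhd_antimono[of _ "{\<rho>}" _ _ x0] by (meson finite.emptyI finite_insert order.refl order.trans)
  then have "(\<exists>J\<subseteq>{\<lambda>x. ennreal (p x)}. finite J \<and> (\<exists>\<epsilon>>0. basic_nbhd J x0 \<epsilon> \<subseteq> U)) \<longleftrightarrow>
      (\<exists>\<epsilon>>0. {x. p (x - x0) < \<epsilon>} \<subseteq> U)" for x0
    by (metis (no_types, lifting) ball_eq)
  then show ?thesis
    unfolding seminorm_topology_def openin_induced_topology by simp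
qed

lemma continuous_map_seminorm_topology:
  assumes "vector_space smul" and "seminorm smul p"
  shows "continuous_map (seminorm_topology p) euclideanreal p"
  unfolding continuous_map_def
proof (intro conjI allI impI)
  fix V :: "real set"
  assume "openin euclideanreal V"
  have "\<exists>\<epsilon>>0. {x. p (x - x0) < \<epsilon>} \<subseteq> {x. p x \<in> V}" if x0: "p x0 \<in> V" for x0
  proof -
    obtain \<epsilon> where "\<epsilon> > 0" and \<epsilon>: "ball (p x0) \<epsilon> \<subseteq> V"
      using \<open>openin euclideanreal V\<close> x0 by (meson open_contains_ball open_openin)
    have "p x \<in> ball (p x0) \<epsilon>" if "p (x - x0) < \<epsilon>" for x
      using that seminorm_abs_diff_le[OF assms, of x x0] by (simp add: dist_real_def)
    with \<open>\<epsilon> > 0\<close> \<epsilon> show ?thesis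
      by blast
  qed
  then show "openin (seminorm_topology p) {x \<in> topspace (seminorm_topology p). p x \<in> V}"
    by (simp add: openin_seminorm_topology)
qed auto

lemma seminorm_topology_coarser:
  assumes "continuous_map (induced_topology R) euclideanreal p" and "p 0 = 0"
  shows "coarser_topology (seminorm_topology p) (induced_topology R)"
  unfolding coarser_topology_def openin_seminorm_topology
proof (intro allI impI)
  fix U
  assume U: "\<forall>x0\<in>U. \<exists>\<epsilon>>0. {x. p (x - x0) < \<epsilon>} \<subseteq> U"
  show "openin (induced_topology R) U"
    unfolding openin_induced_topology
  proof
    fix x0
    assume "x0 \<in> U"
    then obtain e where "e > 0" and e: "{x. p (x - x0) < e} \<subseteq> U"
      using U by blast
    have "openin (induced_topology R) {x. p x \<in> {..<e}}"
      using openin_continuous_map_preimage[OF assms(1), of "{..<e}"] by simp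
    moreover have "0 \<in> {x. p x \<in> {..<e}}"
      using \<open>e > 0\<close> assms(2) by simp
    ultimately obtain J d where J: "J \<subseteq> R" "finite J" "d > 0"
      and "basic_nbhd J 0 d \<subseteq> {x. p x \<in> {..<e}}"
      unfolding openin_induced_topology by blast
    then have "basic_nbhd J x0 d \<subseteq> U"
      using e basic_nbhd_translate[of _ J x0 d] by auto
    with J show "\<exists>J\<subseteq>R. finite J \<and> (\<exists>\<epsilon>>0. basic_nbhd J x0 \<epsilon> \<subseteq> U)"
      by blast
  qed
qed

theorem theorem3p5:
  fixes smul :: "'k::real_normed_field \<Rightarrow> 'a::ab_group_add \<Rightarrow> 'a"
    and \<tau> \<tau>F :: "'a topology" and p :: "'a \<Rightarrow> real"
  assumes "vector_space smul"
    and "ext_lc_topology smul \<tau>"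
    and "finest_lc_topology smul \<tau> \<tau>F"
    and "seminorm smul p"
  shows "continuous_map \<tau> euclideanreal p \<longleftrightarrow> continuous_map \<tau>F euclideanreal p"
proof -
  obtain R where \<tau>: "\<tau> = induced_topology R"
    using assms(2) unfolding ext_lc_topology_def by blast
  have lc: "lc_topology smul \<tau>F" and "coarser_topology \<tau>F \<tau>"
    and finest: "\<And>\<sigma>. lc_topology smul \<sigma> \<Longrightarrow> coarser_topology \<sigma> \<tau> \<Longrightarrow> coarser_topology \<sigma> \<tau>F"
    using assms(3) unfolding finest_lc_topology_def by blast+
  have "topspace \<tau>F = UNIV"
    using lc unfolding lc_topology_def by auto
  show ?thesis
  proof
    assume "continuous_map \<tau> euclideanreal p"
    then have "coarser_topology (seminorm_topology p) \<tau>"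
      using \<tau> seminorm_topology_coarser seminorm_zero[OF assms(1,4)] by blast
    then have "coarser_topology (seminorm_topology p) \<tau>F"
      using finest lc_topology_seminorm_topology[OF assms(4)] by blast
    from continuous_map_seminorm_topology[OF assms(1,4)] this
    show "continuous_map \<tau>F euclideanreal p"
      by (rule continuous_map_coarser_topology) (simp add: \<open>topspace \<tau>F = UNIV\<close>)
  next
    assume "continuous_map \<tau>F euclideanreal p"
    from this \<open>coarser_topology \<tau>F \<tau>\<close> show "continuous_map \<tau> euclideanreal p"
      by (rule continuous_map_coarser_topology) (simp add: \<tau> \<open>topspace \<tau>F = UNIV\<close>)
  qed
qed

end
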